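(* Let $\mathcal{X}$ be a covariate space, $\mathbb{P}^X$ a distribution on $\mathcal{X}$, $A\ge 0$, $\sigma>0$, and $\mathcal{C}$ a class of functions $\mathcal{X}\to\mathbb{R}$. For each $n$, let $\mathcal{V}_n$ be a finite set and $\mathcal{C}_n=\{m_{n,v} : v\in\mathcal{V}_n\}\subset\mathcal{C}$ a collection of functions indexed by $\mathcal{V}_n$ such that, for a sequence $\delta_n>0$, $$\int \big(m_{n,v}(x)-m_{n,v'}(x)\big)^2\, d\mathbb{P}^X(x)\ \ge\ \delta_n^2\quad\text{for all } v\neq v'\in\mathcal{V}_n \text{ and all } n.$$ If furthermore $\sup_{v,v'\in\mathcal{V}_n}\sup_x \big(m_{n,v}(x)-m_{n,v'}(x)\big)^2\to 0$ as $n\to\infty$, then $$\mathfrak{M}_n^{\mathrm{EB}}(\mathcal{C};A,\sigma^2)\ \gtrsim\ \frac{\sigma^4}{(\sigma^2+A)^2}\cdot\delta_n^2\cdot \inf_{\hat V_n}\mathbb{P}[\hat V_n\neq V_n].$$ Here $V_n$ is drawn uniformly from $\mathcal{V}_n$, and conditionally on $V_n=v$ the pairs $(X_i,Z_i)_{1\le i\le n}$ are drawn i.i.d. from the model below with regression function $m=m_{n,v}$; the infimum is over all estimators $\hat V_n$ measurable with respect to $(X_i,Z_i)_{1\le i\le n}$.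
   Context: Model: for a function $m:\mathcal{X}\to\mathbb{R}$, data are i.i.d. triples with $X_i\sim\mathbb{P}^X$, $\mu_i\mid X_i\sim N(m(X_i),A)$, $Z_i\mid \mu_i\sim N(\mu_i,\sigma^2)$; only $(X_i,Z_i)$ are observed, $\sigma^2$ known. The Bayes rule is $t^*_{m,A}(x,z)=\frac{A}{\sigma^2+A}z+\frac{\sigma^2}{\sigma^2+A}m(x)$. For a denoiser $t:\mathcal{X}\times\mathbb{R}\to\mathbb{R}$, the excess risk is $L(t;m,A)=\mathbb{E}_{m,A}[(t(X_{n+1},Z_{n+1})-\mu_{n+1})^2]-\mathbb{E}_{m,A}[(t^*_{m,A}(X_{n+1},Z_{n+1})-\mu_{n+1})^2]$, where $(X_{n+1},\mu_{n+1},Z_{n+1})$ is a fresh independent draw from the model. The minimax empirical Bayes regret is $\mathfrak{M}_n^{\mathrm{EB}}(\mathcal{C};A,\sigma^2)=\inf_{\hat t_n}\sup_{m\in\mathcal{C}}\mathbb{E}_{m,A}[L(\hat t_n;m,A)]$, the infimum over denoisers $\hat t_n$ that are measurable functions of $(X_i,Z_i)_{1\le i\le n}$ (they may depend on $A$), the outer expectation over these data. Notation: for sequences $a_n,b_n>0$, $a_n\lesssim b_n$ means $\limsup_n a_n/b_n\le c$ for a constant $c$ not depending on $A,\sigma,n$; $a_n\gtrsim b_n$ means $b_n\lesssim a_n$. *)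

theory Defs
  imports "HOL-Probability.Probability"
begin

definition gauss :: "real \<Rightarrow> real \<Rightarrow> real measure" where
  "gauss mu s = (if s = 0 then return borel mu else density lborel (normal_density mu s))"

text \<open>Mean squared error E[(t(X,Z) - mu)^2] of a denoiser t under the model
  X ~ PX, mu | X ~ N(m X, A), Z | mu ~ N(mu, sigma^2), as an extended nonnegative value.\<close>
definition risk :: "'x measure \<Rightarrow> ('x \<Rightarrow> real) \<Rightarrow> real \<Rightarrow> real \<Rightarrow> ('x \<Rightarrow> real \<Rightarrow> real) \<Rightarrow> ennreal" where
  "risk PX m A \<sigma> t =
     (\<integral>\<^sup>+ x. (\<integral>\<^sup>+ \<mu>. (\<integral>\<^sup>+ z. ennreal ((t x z - \<mu>)\<^sup>2) \<partial>gauss \<mu> \<sigma>) \<partial>gauss (m x) (sqrt A)) \<partial>PX)"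

definition bayes_rule :: "('x \<Rightarrow> real) \<Rightarrow> real \<Rightarrow> real \<Rightarrow> 'x \<Rightarrow> real \<Rightarrow> real" where
  "bayes_rule m A \<sigma> x z = A / (\<sigma>\<^sup>2 + A) * z + \<sigma>\<^sup>2 / (\<sigma>\<^sup>2 + A) * m x"

definition excess_risk :: "'x measure \<Rightarrow> ('x \<Rightarrow> real) \<Rightarrow> real \<Rightarrow> real \<Rightarrow> ('x \<Rightarrow> real \<Rightarrow> real) \<Rightarrow> ennreal" where
  "excess_risk PX m A \<sigma> t = risk PX m A \<sigma> t - risk PX m A \<sigma> (bayes_rule m A \<sigma>)"

definition obs_law :: "'x measure \<Rightarrow> ('x \<Rightarrow> real) \<Rightarrow> real \<Rightarrow> real \<Rightarrow> ('x \<times> real) measure" where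
  "obs_law PX m A \<sigma> =
     PX \<bind> (\<lambda>x. gauss (m x) (sqrt A) \<bind> (\<lambda>\<mu>. distr (gauss \<mu> \<sigma>) (PX \<Otimes>\<^sub>M borel) (\<lambda>z. (x, z))))"

definition data_space :: "'x measure \<Rightarrow> nat \<Rightarrow> (nat \<Rightarrow> 'x \<times> real) measure" where
  "data_space PX n = PiM {..<n} (\<lambda>_. PX \<Otimes>\<^sub>M borel)"

definition sample_law :: "'x measure \<Rightarrow> ('x \<Rightarrow> real) \<Rightarrow> real \<Rightarrow> real \<Rightarrow> nat \<Rightarrow> (nat \<Rightarrow> 'x \<times> real) measure" where
  "sample_law PX m A \<sigma> n = PiM {..<n} (\<lambda>_. obs_law PX m A \<sigma>)"

definition estimators :: "'x measure \<Rightarrow> nat \<Rightarrow> ((nat \<Rightarrow> 'x \<times> real) \<Rightarrow> 'x \<Rightarrow> real \<Rightarrow> real) set" where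
  "estimators PX n = {th. (\<lambda>(D, (x, z)). th D x z) \<in> borel_measurable (data_space PX n \<Otimes>\<^sub>M (PX \<Otimes>\<^sub>M borel))}"

definition minimax_EB :: "'x measure \<Rightarrow> ('x \<Rightarrow> real) set \<Rightarrow> real \<Rightarrow> real \<Rightarrow> nat \<Rightarrow> ennreal" where
  "minimax_EB PX C A \<sigma> n =
     (INF th \<in> estimators PX n. SUP m \<in> C.
        \<integral>\<^sup>+ D. excess_risk PX m A \<sigma> (th D) \<partial>sample_law PX m A \<sigma> n)"

definition min_test_error :: "'x measure \<Rightarrow> 'v set \<Rightarrow> ('v \<Rightarrow> 'x \<Rightarrow> real) \<Rightarrow> real \<Rightarrow> real \<Rightarrow> nat \<Rightarrow> real" where
  "min_test_error PX Vs mf A \<sigma> n =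
     (INF Vh \<in> measurable (data_space PX n) (count_space UNIV).
        (\<Sum>v\<in>Vs. measure (sample_law PX (mf v) A \<sigma> n) {D \<in> space (data_space PX n). Vh D \<noteq> v})
          / real (card Vs))"

end

theory Submission
  imports Defs
begin

text \<open>
  Since the posterior of \<open>\<mu>\<close> given \<open>(x, z)\<close> is Gaussian with mean \<open>t*(x, z)\<close>, the excess risk
  of a denoiser \<open>t\<close> is the squared distance between \<open>t\<close> and \<open>t*\<close> under the marginal law of
  \<open>(X, Z)\<close>, where \<open>Z | X = x\<close> is \<open>N(m x, \<sigma>\<^sup>2 + A)\<close>. The Bayes rules of two regression functions
  differ by the shift \<open>k (m\<^sub>v - m\<^sub>w)\<close> with \<open>k = \<sigma>\<^sup>2 / (\<sigma>\<^sup>2 + A)\<close>; when \<open>m\<^sub>v\<close> and \<open>m\<^sub>w\<close> are uniformly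
  close, the two marginal densities of \<open>Z\<close> are comparable on an interval of length
  \<open>2 sqrt (\<sigma>\<^sup>2 + A)\<close>, so no denoiser is good for both:
  the two excess risks sum to at least \<open>k\<^sup>2 \<parallel>m\<^sub>v - m\<^sub>w\<parallel>\<^sup>2 / 12\<close>.
  Hence the test that picks the \<open>v\<close> of smallest excess risk of the estimated denoiser can only
  err on data where the excess risk under the truth is at least \<open>k\<^sup>2 \<delta>\<^sup>2 / 24\<close>, and averaging
  over the uniform prior on \<open>V\<close> gives the bound with constant 24.
\<close>

lemma nn_integral_normal_density:
  "0 < s \<Longrightarrow> (\<integral>\<^sup>+z. ennreal (normal_density a s z) \<partial>lborel) = 1"
  by (simp add: nn_integral_eq_integral)

lemma normal_density_second_moment:
  assumes "0 < s"
  shows "(\<integral>\<^sup>+x. ennreal (normal_density b s x * (c - x)\<^sup>2) \<partial>lborel) = ennreal ((c - b)\<^sup>2 + s\<^sup>2)"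
proof -
  have "has_bochner_integral lborel (normal_density b s) 1"
    using assms by (simp add: has_bochner_integral_iff)
  \<comment> \<open>expand \<open>(c - x)\<^sup>2\<close> around \<open>b\<close>, with exponents shaped as in \<open>normal_moment_odd/even\<close>\<close>
  then have "has_bochner_integral lborel
      (\<lambda>x. (c - b)\<^sup>2 * normal_density b s x + (-2 * (c - b)) * (normal_density b s x * (x - b) ^ (2 * 0 + 1))
        + normal_density b s x * (x - b) ^ (2 * 1))
      ((c - b)\<^sup>2 * 1 + (-2 * (c - b)) * 0 + fact (2 * 1) / ((2 / s\<^sup>2) ^ 1 * fact 1))"
    using assms by (intro has_bochner_integral_add has_bochner_integral_mult_right normal_moment_odd normal_moment_even)
  then have "has_bochner_integral lborel (\<lambda>x. normal_density b s x * (c - x)\<^sup>2) ((c - b)\<^sup>2 + s\<^sup>2)"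
    using assms by (simp add: power2_eq_square algebra_simps fact_numeral)
  then show ?thesis
    by (simp add: nn_integral_eq_integral has_bochner_integral_iff)
qed

lemma normal_density_posterior_factorization:
  fixes \<sigma> A a z \<mu> :: real
  assumes "0 < \<sigma>" "0 < A"
  shows "normal_density a (sqrt A) \<mu> * normal_density \<mu> \<sigma> z =
     normal_density a (sqrt (\<sigma>\<^sup>2 + A)) z *
     normal_density (A / (\<sigma>\<^sup>2 + A) * z + \<sigma>\<^sup>2 / (\<sigma>\<^sup>2 + A) * a) (sqrt (A * \<sigma>\<^sup>2 / (\<sigma>\<^sup>2 + A))) \<mu>"
proof -
  define S where "S = \<sigma>\<^sup>2 + A"
  have S: "0 < S" "0 < \<sigma>\<^sup>2" using assms by (simp_all add: S_def add_pos_pos)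
  have sqrt_eq: "sqrt (2 * pi * A) * sqrt (2 * pi * \<sigma>\<^sup>2) = sqrt (2 * pi * S) * sqrt (2 * pi * (A * \<sigma>\<^sup>2 / S))"
    (is "?d = ?d'")
    unfolding real_sqrt_mult[symmetric] using S by (simp add: field_simps)
  have exp_eq: "- (\<mu> - a)\<^sup>2 / (2 * A) + - (z - \<mu>)\<^sup>2 / (2 * \<sigma>\<^sup>2) =
      - (z - a)\<^sup>2 / (2 * S) + - (\<mu> - (A / S * z + \<sigma>\<^sup>2 / S * a))\<^sup>2 / (2 * (A * \<sigma>\<^sup>2 / S))"
    (is "?e = ?e'")
  proof -
    have "- (\<mu> - a)\<^sup>2 / (2 * A) + - (z - \<mu>)\<^sup>2 / (2 * \<sigma>\<^sup>2)
        = - (A * S * (z - \<mu>)\<^sup>2 + \<sigma>\<^sup>2 * S * (\<mu> - a)\<^sup>2) / (2 * A * \<sigma>\<^sup>2 * S)"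
      using S assms by (simp add: field_simps)
    also have "A * S * (z - \<mu>)\<^sup>2 + \<sigma>\<^sup>2 * S * (\<mu> - a)\<^sup>2 = A * \<sigma>\<^sup>2 * (z - a)\<^sup>2 + (S * \<mu> - A * z - \<sigma>\<^sup>2 * a)\<^sup>2"
      unfolding S_def by (simp add: power2_eq_square algebra_simps)
    also have "- (A * \<sigma>\<^sup>2 * (z - a)\<^sup>2 + (S * \<mu> - A * z - \<sigma>\<^sup>2 * a)\<^sup>2) / (2 * A * \<sigma>\<^sup>2 * S)
        = - (z - a)\<^sup>2 / (2 * S) + - ((S * \<mu> - A * z - \<sigma>\<^sup>2 * a) / S)\<^sup>2 / (2 * (A * \<sigma>\<^sup>2 / S))"
      using S assms by (simp add: field_simps power2_eq_square)
    also have "(S * \<mu> - A * z - \<sigma>\<^sup>2 * a) / S = \<mu> - (A / S * z + \<sigma>\<^sup>2 / S * a)"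
      using S by (simp add: field_simps)
    finally show ?thesis .
  qed
  have "normal_density a (sqrt A) \<mu> * normal_density \<mu> \<sigma> z = exp ?e / ?d"
    using assms unfolding normal_density_def by (simp add: mult_exp_exp)
  also have "\<dots> = exp ?e' / ?d'"
    by (simp only: sqrt_eq exp_eq)
  finally show ?thesis
    using S assms unfolding S_def[symmetric] normal_density_def by (simp add: mult_exp_exp)
qed

lemma nn_integral_gauss:
  assumes "0 < s" "g \<in> borel_measurable borel" "\<And>z. 0 \<le> g z"
  shows "(\<integral>\<^sup>+z. ennreal (g z) \<partial>gauss \<mu> s) = (\<integral>\<^sup>+z. ennreal (normal_density \<mu> s z * g z) \<partial>lborel)"
  using assms by (simp add: gauss_def nn_integral_density ennreal_mult)

lemma normal_mixture_squared_error:
  fixes f :: "real \<Rightarrow> real" and a \<sigma> A :: real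
  assumes f[measurable]: "f \<in> borel_measurable borel" and \<sigma>: "0 < \<sigma>" and A: "0 < A"
  defines "t z \<equiv> A / (\<sigma>\<^sup>2 + A) * z + \<sigma>\<^sup>2 / (\<sigma>\<^sup>2 + A) * a"
  shows "(\<integral>\<^sup>+\<mu>. ennreal (normal_density a (sqrt A) \<mu>) *
            (\<integral>\<^sup>+z. ennreal (normal_density \<mu> \<sigma> z * (f z - \<mu>)\<^sup>2) \<partial>lborel) \<partial>lborel)
     = ennreal (A * \<sigma>\<^sup>2 / (\<sigma>\<^sup>2 + A))
       + (\<integral>\<^sup>+z. ennreal (normal_density a (sqrt (\<sigma>\<^sup>2 + A)) z * (f z - t z)\<^sup>2) \<partial>lborel)"
proof -
  define s where "s = sqrt (\<sigma>\<^sup>2 + A)"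
  define \<tau> where "\<tau> = sqrt (A * \<sigma>\<^sup>2 / (\<sigma>\<^sup>2 + A))"
  have "0 < \<sigma>\<^sup>2 + A" using \<sigma> A by (simp add: add_pos_pos)
  then have s: "0 < s" and \<tau>: "0 < \<tau>" "\<tau>\<^sup>2 = A * \<sigma>\<^sup>2 / (\<sigma>\<^sup>2 + A)"
    using \<sigma> A by (simp_all add: s_def \<tau>_def)
  have "(\<integral>\<^sup>+\<mu>. ennreal (normal_density a (sqrt A) \<mu>) *
            (\<integral>\<^sup>+z. ennreal (normal_density \<mu> \<sigma> z * (f z - \<mu>)\<^sup>2) \<partial>lborel) \<partial>lborel)
      = (\<integral>\<^sup>+\<mu>. \<integral>\<^sup>+z. ennreal (normal_density a (sqrt A) \<mu> * (normal_density \<mu> \<sigma> z * (f z - \<mu>)\<^sup>2)) \<partial>lborel \<partial>lborel)"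
    by (intro nn_integral_cong, subst nn_integral_cmult[symmetric]) (auto simp: ennreal_mult)
  also have "\<dots> = (\<integral>\<^sup>+\<mu>. \<integral>\<^sup>+z. ennreal (normal_density a s z * (normal_density (t z) \<tau> \<mu> * (f z - \<mu>)\<^sup>2)) \<partial>lborel \<partial>lborel)"
    unfolding mult.assoc[symmetric] normal_density_posterior_factorization[OF \<sigma> A] s_def \<tau>_def t_def ..
  also have "\<dots> = (\<integral>\<^sup>+z. \<integral>\<^sup>+\<mu>. ennreal (normal_density a s z * (normal_density (t z) \<tau> \<mu> * (f z - \<mu>)\<^sup>2)) \<partial>lborel \<partial>lborel)"
    unfolding t_def normal_density_def by (intro lborel_pair.Fubini') measurable
  also have "\<dots> = (\<integral>\<^sup>+z. ennreal (normal_density a s z) * ennreal ((f z - t z)\<^sup>2 + \<tau>\<^sup>2) \<partial>lborel)"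
  proof (intro nn_integral_cong)
    fix z
    show "(\<integral>\<^sup>+\<mu>. ennreal (normal_density a s z * (normal_density (t z) \<tau> \<mu> * (f z - \<mu>)\<^sup>2)) \<partial>lborel)
        = ennreal (normal_density a s z) * ennreal ((f z - t z)\<^sup>2 + \<tau>\<^sup>2)"
      using normal_density_second_moment[OF \<tau>(1), of "t z" "f z"]
      by (simp add: ennreal_mult'[of "normal_density a s z"] nn_integral_cmult)
  qed
  also have "\<dots> = (\<integral>\<^sup>+z. ennreal (normal_density a s z * (f z - t z)\<^sup>2) + ennreal (\<tau>\<^sup>2) * ennreal (normal_density a s z) \<partial>lborel)"
    by (intro nn_integral_cong) (simp add: ennreal_mult[symmetric] distrib_left mult_ac flip: ennreal_plus)
  also have "\<dots> = ennreal (A * \<sigma>\<^sup>2 / (\<sigma>\<^sup>2 + A)) + (\<integral>\<^sup>+z. ennreal (normal_density a s z * (f z - t z)\<^sup>2) \<partial>lborel)"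
    using s \<tau> by (subst nn_integral_add) (auto simp: t_def nn_integral_cmult nn_integral_normal_density add.commute)
  finally show ?thesis
    unfolding s_def .
qed

lemma gauss_mixture_squared_error:
  fixes f :: "real \<Rightarrow> real"
  assumes f[measurable]: "f \<in> borel_measurable borel" and \<sigma>: "0 < \<sigma>" and A: "0 \<le> A"
  shows "(\<integral>\<^sup>+\<mu>. \<integral>\<^sup>+z. ennreal ((f z - \<mu>)\<^sup>2) \<partial>gauss \<mu> \<sigma> \<partial>gauss a (sqrt A))
     = ennreal (A * \<sigma>\<^sup>2 / (\<sigma>\<^sup>2 + A))
       + (\<integral>\<^sup>+z. ennreal (normal_density a (sqrt (\<sigma>\<^sup>2 + A)) z *
                   (f z - (A / (\<sigma>\<^sup>2 + A) * z + \<sigma>\<^sup>2 / (\<sigma>\<^sup>2 + A) * a))\<^sup>2) \<partial>lborel)"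
proof -
  have inner: "(\<integral>\<^sup>+z. ennreal ((f z - \<mu>)\<^sup>2) \<partial>gauss \<mu> \<sigma>)
      = (\<integral>\<^sup>+z. ennreal (normal_density \<mu> \<sigma> z * (f z - \<mu>)\<^sup>2) \<partial>lborel)" for \<mu>
    using \<sigma> by (intro nn_integral_gauss) auto
  have inner_measurable:
    "(\<lambda>\<mu>. \<integral>\<^sup>+z. ennreal (normal_density \<mu> \<sigma> z * (f z - \<mu>)\<^sup>2) \<partial>lborel) \<in> borel_measurable borel"
    unfolding normal_density_def by measurable
  show ?thesis
  proof (cases "A = 0")
    case True
    then show ?thesis
      using \<sigma> inner_measurable by (simp only: inner) (simp add: gauss_def nn_integral_return)
  next
    case False
    with A have "0 < A" by simp
    with \<sigma> inner_measurable show ?thesis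
      by (simp only: inner) (simp add: gauss_def nn_integral_density normal_mixture_squared_error)
  qed
qed

lemma measurable_curried_compose:
  assumes "(\<lambda>(x, z). t x z) \<in> borel_measurable (N \<Otimes>\<^sub>M L)" "f \<in> measurable M N" "g \<in> measurable M L"
  shows "(\<lambda>y. t (f y) (g y)) \<in> borel_measurable M"
  using measurable_compose[OF measurable_Pair[OF assms(2,3)] assms(1)] by simp

lemma risk_decomposition:
  fixes PX :: "'x measure" and t :: "'x \<Rightarrow> real \<Rightarrow> real"
  assumes PX: "prob_space PX" and A: "0 \<le> A" and \<sigma>: "0 < \<sigma>" and m[measurable]: "m \<in> borel_measurable PX"
    and t: "(\<lambda>(x, z). t x z) \<in> borel_measurable (PX \<Otimes>\<^sub>M borel)"
  shows "risk PX m A \<sigma> t = ennreal (A * \<sigma>\<^sup>2 / (\<sigma>\<^sup>2 + A)) +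
    (\<integral>\<^sup>+x. \<integral>\<^sup>+z. ennreal (normal_density (m x) (sqrt (\<sigma>\<^sup>2 + A)) z * (t x z - bayes_rule m A \<sigma> x z)\<^sup>2) \<partial>lborel \<partial>PX)"
proof -
  interpret prob_space PX by (rule PX)
  note measurable_curried_compose[OF t, measurable]
  have "risk PX m A \<sigma> t = (\<integral>\<^sup>+x. ennreal (A * \<sigma>\<^sup>2 / (\<sigma>\<^sup>2 + A)) +
    (\<integral>\<^sup>+z. ennreal (normal_density (m x) (sqrt (\<sigma>\<^sup>2 + A)) z * (t x z - bayes_rule m A \<sigma> x z)\<^sup>2) \<partial>lborel) \<partial>PX)"
    unfolding risk_def
  proof (intro nn_integral_cong)
    fix x assume "x \<in> space PX"
    then have "t x \<in> borel_measurable borel" by measurable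
    from gauss_mixture_squared_error[OF this \<sigma> A]
    show "(\<integral>\<^sup>+\<mu>. \<integral>\<^sup>+z. ennreal ((t x z - \<mu>)\<^sup>2) \<partial>gauss \<mu> \<sigma> \<partial>gauss (m x) (sqrt A)) = ennreal (A * \<sigma>\<^sup>2 / (\<sigma>\<^sup>2 + A)) +
      (\<integral>\<^sup>+z. ennreal (normal_density (m x) (sqrt (\<sigma>\<^sup>2 + A)) z * (t x z - bayes_rule m A \<sigma> x z)\<^sup>2) \<partial>lborel)"
      by (simp add: bayes_rule_def)
  qed
  also have "\<dots> = ennreal (A * \<sigma>\<^sup>2 / (\<sigma>\<^sup>2 + A)) +
    (\<integral>\<^sup>+x. \<integral>\<^sup>+z. ennreal (normal_density (m x) (sqrt (\<sigma>\<^sup>2 + A)) z * (t x z - bayes_rule m A \<sigma> x z)\<^sup>2) \<partial>lborel \<partial>PX)"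
    by (subst nn_integral_add) (auto simp: bayes_rule_def normal_density_def emeasure_space_1)
  finally show ?thesis .
qed

lemma excess_risk_eq_distance_to_bayes_rule:
  fixes PX :: "'x measure" and t :: "'x \<Rightarrow> real \<Rightarrow> real"
  assumes PX: "prob_space PX" and A: "0 \<le> A" and \<sigma>: "0 < \<sigma>" and m[measurable]: "m \<in> borel_measurable PX"
    and t: "(\<lambda>(x, z). t x z) \<in> borel_measurable (PX \<Otimes>\<^sub>M borel)"
  shows "excess_risk PX m A \<sigma> t =
    (\<integral>\<^sup>+x. \<integral>\<^sup>+z. ennreal (normal_density (m x) (sqrt (\<sigma>\<^sup>2 + A)) z * (t x z - bayes_rule m A \<sigma> x z)\<^sup>2) \<partial>lborel \<partial>PX)"
proof -
  have "(\<lambda>(x, z). bayes_rule m A \<sigma> x z) \<in> borel_measurable (PX \<Otimes>\<^sub>M borel)"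
    unfolding bayes_rule_def by measurable
  from risk_decomposition[OF PX A \<sigma> m this] risk_decomposition[OF PX A \<sigma> m t]
  show ?thesis
    unfolding excess_risk_def by simp
qed

lemma normal_density_ge_within_sd:
  assumes s: "0 < s" and z: "\<bar>z - a\<bar> \<le> s"
  shows "1 / (6 * s) \<le> normal_density a s z"
proof -
  have "(z - a)\<^sup>2 \<le> s\<^sup>2"
    using power_mono[OF z abs_ge_zero, of 2] by simp
  then have "(z - a)\<^sup>2 / (2 * s\<^sup>2) \<le> 1 / 2"
    using s by (simp add: field_simps)
  then have "1 / 2 \<le> exp (- (z - a)\<^sup>2 / (2 * s\<^sup>2))"
    using exp_ge_add_one_self[of "- (z - a)\<^sup>2 / (2 * s\<^sup>2)"] by simp
  moreover have "sqrt (2 * pi * s\<^sup>2) \<le> 3 * s"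
  proof -
    have "sqrt (2 * pi) \<le> 3"
      using pi_less_4 by (intro real_le_lsqrt) auto
    then show ?thesis
      using s by (simp add: real_sqrt_mult)
  qed
  ultimately have "1 / (3 * s) * (1 / 2) \<le> 1 / sqrt (2 * pi * s\<^sup>2) * exp (- (z - a)\<^sup>2 / (2 * s\<^sup>2))"
    using s by (intro mult_mono) (auto simp: field_simps)
  then show ?thesis
    unfolding normal_density_def by simp
qed

lemma normal_density_shift_ge:
  assumes s: "0 < s" and z: "\<bar>z - a\<bar> \<le> s" and ab: "\<bar>a - b\<bar> \<le> s / 2"
  shows "normal_density a s z / 3 \<le> normal_density b s z"
proof -
  have "(z - b)\<^sup>2 - (z - a)\<^sup>2 = (a - b) * (2 * (z - a) + (a - b))"
    by (simp add: power2_eq_square algebra_simps)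
  also have "\<dots> \<le> \<bar>a - b\<bar> * \<bar>2 * (z - a) + (a - b)\<bar>"
    by (metis abs_ge_self abs_mult)
  also have "\<dots> \<le> \<bar>a - b\<bar> * (2 * \<bar>z - a\<bar> + \<bar>a - b\<bar>)"
    by (intro mult_left_mono) (auto simp: abs_if)
  also have "\<dots> \<le> s / 2 * (2 * s + s / 2)"
    using ab z by (intro mult_mono add_mono) auto
  also have "\<dots> \<le> 2 * s\<^sup>2"
    using s by (simp add: power2_eq_square field_simps)
  finally have "0 \<le> ((z - a)\<^sup>2 - (z - b)\<^sup>2 + 2 * s\<^sup>2) / (2 * s\<^sup>2)"
    by simp
  also have "\<dots> = - (z - b)\<^sup>2 / (2 * s\<^sup>2) - (- (z - a)\<^sup>2 / (2 * s\<^sup>2) - 1)"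
    using s by (simp add: field_simps)
  finally have exponents: "- (z - a)\<^sup>2 / (2 * s\<^sup>2) - 1 \<le> - (z - b)\<^sup>2 / (2 * s\<^sup>2)"
    by simp
  have "exp (- (z - a)\<^sup>2 / (2 * s\<^sup>2)) / 3 \<le> exp (- (z - a)\<^sup>2 / (2 * s\<^sup>2)) / exp 1"
    using exp_le by (intro divide_left_mono) auto
  also have "\<dots> = exp (- (z - a)\<^sup>2 / (2 * s\<^sup>2) - 1)"
    by (simp add: exp_diff)
  also have "\<dots> \<le> exp (- (z - b)\<^sup>2 / (2 * s\<^sup>2))"
    using exponents by simp
  finally have "1 / sqrt (2 * pi * s\<^sup>2) * (exp (- (z - a)\<^sup>2 / (2 * s\<^sup>2)) / 3)
      \<le> 1 / sqrt (2 * pi * s\<^sup>2) * exp (- (z - b)\<^sup>2 / (2 * s\<^sup>2))"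
    by (intro mult_left_mono) auto
  then show ?thesis
    unfolding normal_density_def by simp
qed

lemma weighted_squares_shift_lower_bound:
  fixes p q u d :: real
  assumes "0 \<le> p" "p / 3 \<le> q"
  shows "p * d\<^sup>2 / 4 \<le> p * u\<^sup>2 + q * (u + d)\<^sup>2"
proof -
  have "p / 3 * (u + d)\<^sup>2 \<le> q * (u + d)\<^sup>2"
    using assms by (intro mult_right_mono) auto
  moreover have "0 \<le> p * ((4 * u + d)\<^sup>2 / 12)"
    using assms by simp
  moreover have "p * ((4 * u + d)\<^sup>2 / 12) = p * u\<^sup>2 + p / 3 * (u + d)\<^sup>2 - p * d\<^sup>2 / 4"
    by (simp add: power2_eq_square field_simps)
  ultimately show ?thesis
    by linarith
qed

lemma normal_density_pair_squared_error_lower: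
  assumes s: "0 < s" and ab: "(a - b)\<^sup>2 \<le> s\<^sup>2 / 4" and u[measurable]: "u \<in> borel_measurable borel"
  shows "ennreal (d\<^sup>2 / 12) \<le> (\<integral>\<^sup>+z. ennreal (normal_density a s z * (u z)\<^sup>2) \<partial>lborel)
                             + (\<integral>\<^sup>+z. ennreal (normal_density b s z * (u z + d)\<^sup>2) \<partial>lborel)"
proof -
  have ab': "\<bar>a - b\<bar> \<le> s / 2"
    using ab s abs_le_square_iff[of "a - b" "s / 2"] by (simp add: power_divide)
  have pointwise: "d\<^sup>2 / (24 * s) \<le> normal_density a s z * (u z)\<^sup>2 + normal_density b s z * (u z + d)\<^sup>2"
    if z: "\<bar>z - a\<bar> \<le> s" for z
  proof -
    have "d\<^sup>2 / (24 * s) = 1 / (6 * s) * d\<^sup>2 / 4"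
      by simp
    also have "\<dots> \<le> normal_density a s z * d\<^sup>2 / 4"
      using normal_density_ge_within_sd[OF s z] by (intro divide_right_mono mult_right_mono) auto
    also have "\<dots> \<le> normal_density a s z * (u z)\<^sup>2 + normal_density b s z * (u z + d)\<^sup>2"
      using normal_density_shift_ge[OF s z ab'] by (intro weighted_squares_shift_lower_bound) auto
    finally show ?thesis .
  qed
  have "ennreal (d\<^sup>2 / 12) = (\<integral>\<^sup>+z. ennreal (d\<^sup>2 / (24 * s)) * indicator {a - s..a + s} z \<partial>lborel)"
    using s by (simp add: nn_integral_cmult_indicator ennreal_mult[symmetric])
  also have "\<dots> \<le> (\<integral>\<^sup>+z. ennreal (normal_density a s z * (u z)\<^sup>2) + ennreal (normal_density b s z * (u z + d)\<^sup>2) \<partial>lborel)"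
    using pointwise by (intro nn_integral_mono) (auto simp: indicator_def abs_le_iff simp flip: ennreal_plus)
  also have "\<dots> = (\<integral>\<^sup>+z. ennreal (normal_density a s z * (u z)\<^sup>2) \<partial>lborel)
                + (\<integral>\<^sup>+z. ennreal (normal_density b s z * (u z + d)\<^sup>2) \<partial>lborel)"
    by (intro nn_integral_add) measurable
  finally show ?thesis .
qed

lemma excess_risk_two_point_lower:
  fixes PX :: "'x measure" and t :: "'x \<Rightarrow> real \<Rightarrow> real"
  assumes PX: "prob_space PX" and A: "0 \<le> A" and \<sigma>: "0 < \<sigma>"
    and mv[measurable]: "mv \<in> borel_measurable PX" and mw[measurable]: "mw \<in> borel_measurable PX"
    and t: "(\<lambda>(x, z). t x z) \<in> borel_measurable (PX \<Otimes>\<^sub>M borel)"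
    and close: "\<And>x. x \<in> space PX \<Longrightarrow> (mv x - mw x)\<^sup>2 \<le> (\<sigma>\<^sup>2 + A) / 4"
  shows "ennreal (\<sigma>^4 / (\<sigma>\<^sup>2 + A)\<^sup>2 / 12) * (\<integral>\<^sup>+x. ennreal ((mv x - mw x)\<^sup>2) \<partial>PX)
     \<le> excess_risk PX mv A \<sigma> t + excess_risk PX mw A \<sigma> t"
proof -
  note measurable_curried_compose[OF t, measurable]
  define s where "s = sqrt (\<sigma>\<^sup>2 + A)"
  define k where "k = \<sigma>\<^sup>2 / (\<sigma>\<^sup>2 + A)"
  define J where "J m x = (\<integral>\<^sup>+z. ennreal (normal_density (m x) s z * (t x z - bayes_rule m A \<sigma> x z)\<^sup>2) \<partial>lborel)"
    for m x
  have "0 < \<sigma>\<^sup>2 + A"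
    using \<sigma> A by (simp add: add_pos_nonneg)
  then have s: "0 < s" "s\<^sup>2 = \<sigma>\<^sup>2 + A"
    by (simp_all add: s_def)
  have "ennreal (\<sigma>^4 / (\<sigma>\<^sup>2 + A)\<^sup>2 / 12) * (\<integral>\<^sup>+x. ennreal ((mv x - mw x)\<^sup>2) \<partial>PX)
      = (\<integral>\<^sup>+x. ennreal ((k * (mv x - mw x))\<^sup>2 / 12) \<partial>PX)"
    by (subst nn_integral_cmult[symmetric])
      (auto simp: k_def ennreal_mult[symmetric] power_mult_distrib power_divide intro!: nn_integral_cong)
  also have "\<dots> \<le> (\<integral>\<^sup>+x. J mv x + J mw x \<partial>PX)"
  proof (intro nn_integral_mono)
    fix x assume x: "x \<in> space PX"
    have "(mv x - mw x)\<^sup>2 \<le> s\<^sup>2 / 4"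
      using close[OF x] s by simp
    moreover have "(\<lambda>z. t x z - bayes_rule mv A \<sigma> x z) \<in> borel_measurable borel"
      using x unfolding bayes_rule_def by measurable
    ultimately have "ennreal ((k * (mv x - mw x))\<^sup>2 / 12)
        \<le> J mv x + (\<integral>\<^sup>+z. ennreal (normal_density (mw x) s z *
                      ((t x z - bayes_rule mv A \<sigma> x z) + k * (mv x - mw x))\<^sup>2) \<partial>lborel)"
      unfolding J_def by (rule normal_density_pair_squared_error_lower[OF s(1)])
    moreover have "t x z - bayes_rule mv A \<sigma> x z + k * (mv x - mw x) = t x z - bayes_rule mw A \<sigma> x z" for z
      unfolding bayes_rule_def k_def by (simp add: right_diff_distrib)
    ultimately show "ennreal ((k * (mv x - mw x))\<^sup>2 / 12) \<le> J mv x + J mw x"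
      unfolding J_def by simp
  qed
  also have "\<dots> = (\<integral>\<^sup>+x. J mv x \<partial>PX) + (\<integral>\<^sup>+x. J mw x \<partial>PX)"
    unfolding J_def bayes_rule_def normal_density_def by (intro nn_integral_add) measurable
  also have "\<dots> = excess_risk PX mv A \<sigma> t + excess_risk PX mw A \<sigma> t"
    unfolding J_def s_def excess_risk_eq_distance_to_bayes_rule[OF PX A \<sigma> mv t] excess_risk_eq_distance_to_bayes_rule[OF PX A \<sigma> mw t] ..
  finally show ?thesis .
qed

lemma measurable_find:
  assumes "\<And>w. w \<in> set ws \<Longrightarrow> {y \<in> space M. P w y} \<in> sets M"
  shows "(\<lambda>y. find (\<lambda>w. P w y) ws) \<in> measurable M (count_space UNIV)"
  using assms by (induction ws) (auto intro!: measurable_If)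

text \<open>Ties are broken by the first minimiser in a fixed enumeration of \<open>W\<close>, which keeps the
  selector measurable without any order on \<open>'v\<close>.\<close>
lemma measurable_argmin_selector:
  fixes L :: "'v \<Rightarrow> 'a \<Rightarrow> 'b::{linorder_topology, second_countable_topology}"
  assumes W: "finite W" "W \<noteq> {}" and L[measurable]: "\<And>w. w \<in> W \<Longrightarrow> L w \<in> borel_measurable M"
  obtains T where "T \<in> measurable M (count_space UNIV)"
    and "\<And>y. y \<in> space M \<Longrightarrow> T y \<in> W \<and> (\<forall>u\<in>W. L (T y) y \<le> L u y)"
proof -
  obtain ws where ws: "set ws = W"
    using finite_list[OF W(1)] by blast
  define P where "P w y \<longleftrightarrow> (\<forall>u\<in>W. L w y \<le> L u y)" for w y
  define T where "T y = the (find (\<lambda>w. P w y) ws)" for y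
  have "{y \<in> space M. P w y} \<in> sets M" if "w \<in> W" for w
    unfolding P_def using W(1) that by measurable
  with ws have "T \<in> measurable M (count_space UNIV)"
    unfolding T_def by (intro measurable_compose[OF measurable_find measurable_count_space]) auto
  moreover have "T y \<in> W \<and> P (T y) y" for y
  proof -
    have "Min ((\<lambda>w. L w y) ` W) \<in> (\<lambda>w. L w y) ` W"
      using W by simp
    then obtain w where "w \<in> W" "L w y = Min ((\<lambda>w. L w y) ` W)"
      by auto
    with W have "w \<in> W" "P w y"
      by (auto simp: P_def intro: Min_le)
    then obtain w' where w': "find (\<lambda>w. P w y) ws = Some w'"
      using ws by (cases "find (\<lambda>w. P w y) ws") (auto simp: find_None_iff)
    then have "w' \<in> set ws" "P w' y"
      by (auto simp: find_Some_iff)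
    with w' ws show ?thesis
      by (simp add: T_def)
  qed
  ultimately show ?thesis
    using that unfolding P_def by blast
qed

lemma ennreal_mult_measure_le_nn_integral:
  assumes "S \<in> sets M" "0 \<le> K" "\<And>y. y \<in> S \<Longrightarrow> ennreal K \<le> f y"
  shows "ennreal (K * measure M S) \<le> (\<integral>\<^sup>+y. f y \<partial>M)"
proof -
  have "ennreal (K * measure M S) \<le> ennreal K * emeasure M S"
    using assms(2) by (auto simp: measure_def ennreal_mult ennreal_enn2real_if intro: mult_left_mono)
  also have "\<dots> = (\<integral>\<^sup>+y. ennreal K * indicator S y \<partial>M)"
    using assms(1) by (simp add: nn_integral_cmult_indicator)
  also have "\<dots> \<le> (\<integral>\<^sup>+y. f y \<partial>M)"
    using assms(3) by (intro nn_integral_mono) (auto split: split_indicator)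
  finally show ?thesis .
qed

lemma ennreal_mean_le:
  assumes "finite W" "W \<noteq> {}" "\<And>v. v \<in> W \<Longrightarrow> 0 \<le> b v" "\<And>v. v \<in> W \<Longrightarrow> ennreal (b v) \<le> S"
  shows "ennreal ((\<Sum>v\<in>W. b v) / card W) \<le> S"
proof (cases S)
  case (real s)
  with assms have "(\<Sum>v\<in>W. b v) \<le> card W * s"
    using sum_bounded_above[of W b s] by (auto simp: ennreal_le_iff2)
  with real assms(1,2) show ?thesis
    by (simp add: ennreal_leI pos_divide_le_eq card_gt_0_iff mult.commute)
qed simp

lemma sets_obs_law:
  assumes "prob_space PX"
  shows "sets (obs_law PX m A \<sigma>) = sets (PX \<Otimes>\<^sub>M borel)"
proof -
  interpret prob_space PX by (rule assms)
  have "space (gauss a s) = UNIV" for a s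
    by (simp add: gauss_def)
  then show ?thesis
    unfolding obs_law_def using not_empty by (intro sets_bind) (auto intro!: sets_bind)
qed

lemma sets_sample_law:
  assumes "prob_space PX"
  shows "sets (sample_law PX m A \<sigma> n) = sets (data_space PX n)"
  unfolding sample_law_def data_space_def
  by (rule sets_PiM_cong) (auto simp: sets_obs_law[OF assms])

lemma estimator_measurable_compose:
  assumes "th \<in> estimators PX n"
    and "f \<in> measurable M (data_space PX n)" "g \<in> measurable M PX" "h \<in> borel_measurable M"
  shows "(\<lambda>y. th (f y) (g y) (h y)) \<in> borel_measurable M"
  using assms measurable_curried_compose[of "\<lambda>D (x, z). th D x z", OF _ assms(2) measurable_Pair[OF assms(3,4)]]
  by (simp add: estimators_def)

lemma estimator_section_measurable:
  "th \<in> estimators PX n \<Longrightarrow> D \<in> space (data_space PX n) \<Longrightarrow> (\<lambda>(x, z). th D x z) \<in> borel_measurable (PX \<Otimes>\<^sub>M borel)"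
  by (auto simp: estimators_def dest: measurable_Pair2)

lemma excess_risk_estimator_measurable:
  fixes PX :: "'x measure"
  assumes PX: "prob_space PX" and A: "0 \<le> A" and \<sigma>: "0 < \<sigma>" and m[measurable]: "m \<in> borel_measurable PX"
    and th: "th \<in> estimators PX n"
  shows "(\<lambda>D. excess_risk PX m A \<sigma> (th D)) \<in> borel_measurable (data_space PX n)"
proof -
  note estimator_measurable_compose[OF th, measurable]
  have "(\<lambda>(D, x). \<integral>\<^sup>+z. ennreal (normal_density (m x) (sqrt (\<sigma>\<^sup>2 + A)) z * (th D x z - bayes_rule m A \<sigma> x z)\<^sup>2) \<partial>lborel)
      \<in> borel_measurable (data_space PX n \<Otimes>\<^sub>M PX)"
    unfolding bayes_rule_def normal_density_def by measurable
  from sigma_finite_measure.borel_measurable_nn_integral[OF prob_space_imp_sigma_finite[OF PX] this]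
  have "(\<lambda>D. \<integral>\<^sup>+x. \<integral>\<^sup>+z. ennreal (normal_density (m x) (sqrt (\<sigma>\<^sup>2 + A)) z * (th D x z - bayes_rule m A \<sigma> x z)\<^sup>2) \<partial>lborel \<partial>PX)
      \<in> borel_measurable (data_space PX n)"
    by simp
  then show ?thesis
    by (subst measurable_cong[OF excess_risk_eq_distance_to_bayes_rule[OF PX A \<sigma> m estimator_section_measurable[OF th]]])
qed

lemma excess_risk_ge_if_dominated:
  fixes PX :: "'x measure" and t :: "'x \<Rightarrow> real \<Rightarrow> real"
  assumes PX: "prob_space PX" and A: "0 \<le> A" and \<sigma>: "0 < \<sigma>"
    and mv: "mv \<in> borel_measurable PX" and mw: "mw \<in> borel_measurable PX"
    and t: "(\<lambda>(x, z). t x z) \<in> borel_measurable (PX \<Otimes>\<^sub>M borel)"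
    and close: "\<And>x. x \<in> space PX \<Longrightarrow> (mv x - mw x)\<^sup>2 \<le> (\<sigma>\<^sup>2 + A) / 4"
    and sep: "ennreal (\<delta>\<^sup>2) \<le> (\<integral>\<^sup>+x. ennreal ((mv x - mw x)\<^sup>2) \<partial>PX)"
    and dominated: "excess_risk PX mw A \<sigma> t \<le> excess_risk PX mv A \<sigma> t"
  shows "ennreal (\<sigma>^4 / (\<sigma>\<^sup>2 + A)\<^sup>2 * \<delta>\<^sup>2 / 24) \<le> excess_risk PX mv A \<sigma> t"
proof -
  have "2 * ennreal (\<sigma>^4 / (\<sigma>\<^sup>2 + A)\<^sup>2 * \<delta>\<^sup>2 / 24) = ennreal (\<sigma>^4 / (\<sigma>\<^sup>2 + A)\<^sup>2 / 12) * ennreal (\<delta>\<^sup>2)"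
    by (simp add: ennreal_mult[symmetric] mult_ac flip: ennreal_numeral)
  also have "\<dots> \<le> ennreal (\<sigma>^4 / (\<sigma>\<^sup>2 + A)\<^sup>2 / 12) * (\<integral>\<^sup>+x. ennreal ((mv x - mw x)\<^sup>2) \<partial>PX)"
    using sep by (rule mult_left_mono) simp
  also have "\<dots> \<le> excess_risk PX mv A \<sigma> t + excess_risk PX mw A \<sigma> t"
    by (rule excess_risk_two_point_lower[OF PX A \<sigma> mv mw t close])
  also have "\<dots> \<le> 2 * excess_risk PX mv A \<sigma> t"
    using dominated by (simp add: mult_2 add_left_mono)
  finally show ?thesis
    by (subst (asm) ennreal_mult_le_mult_iff) auto
qed

lemma min_test_error_le_sup_excess_risk:
  fixes PX :: "'x measure" and W :: "'v set" and mf :: "'v \<Rightarrow> 'x \<Rightarrow> real"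
  assumes PX: "prob_space PX" and A: "0 \<le> A" and \<sigma>: "0 < \<sigma>"
    and W: "finite W" "W \<noteq> {}"
    and mf_C: "\<And>v. v \<in> W \<Longrightarrow> mf v \<in> C" and mf: "\<And>v. v \<in> W \<Longrightarrow> mf v \<in> borel_measurable PX"
    and sep: "\<And>v w. v \<in> W \<Longrightarrow> w \<in> W \<Longrightarrow> v \<noteq> w \<Longrightarrow>
                ennreal (\<delta>\<^sup>2) \<le> (\<integral>\<^sup>+x. ennreal ((mf v x - mf w x)\<^sup>2) \<partial>PX)"
    and close: "\<And>v w x. v \<in> W \<Longrightarrow> w \<in> W \<Longrightarrow> x \<in> space PX \<Longrightarrow> (mf v x - mf w x)\<^sup>2 \<le> (\<sigma>\<^sup>2 + A) / 4"
    and th: "th \<in> estimators PX n"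
  shows "ennreal (\<sigma>^4 / (\<sigma>\<^sup>2 + A)\<^sup>2 * \<delta>\<^sup>2 / 24 * min_test_error PX W mf A \<sigma> n)
    \<le> (SUP m\<in>C. \<integral>\<^sup>+D. excess_risk PX m A \<sigma> (th D) \<partial>sample_law PX m A \<sigma> n)"
    (is "ennreal (?K * _) \<le> ?sup")
proof -
  define L where "L v D = excess_risk PX (mf v) A \<sigma> (th D)" for v D
  define err where "err T v = measure (sample_law PX (mf v) A \<sigma> n) {D \<in> space (data_space PX n). T D \<noteq> v}"
    for T :: "_ \<Rightarrow> 'v" and v
  obtain T where T: "T \<in> measurable (data_space PX n) (count_space UNIV)"
    and T_min: "\<And>D. D \<in> space (data_space PX n) \<Longrightarrow> T D \<in> W \<and> (\<forall>u\<in>W. L (T D) D \<le> L u D)"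
    using measurable_argmin_selector[OF W, of L] excess_risk_estimator_measurable[OF PX A \<sigma> mf th]
    unfolding L_def by blast
  have err_bound: "ennreal (?K * err T v) \<le> ?sup" if v: "v \<in> W" for v
  proof -
    have "{D \<in> space (data_space PX n). T D \<noteq> v} \<in> sets (sample_law PX (mf v) A \<sigma> n)"
      using T by (simp add: sets_sample_law[OF PX])
    moreover have "ennreal ?K \<le> L v D" if "D \<in> {D \<in> space (data_space PX n). T D \<noteq> v}" for D
    proof -
      from that have D: "D \<in> space (data_space PX n)" and "T D \<noteq> v"
        by auto
      moreover from T_min[OF D] v have "T D \<in> W" "L (T D) D \<le> L v D"
        by auto
      ultimately show ?thesis
        unfolding L_def using v
        by (intro excess_risk_ge_if_dominated[OF PX A \<sigma> mf mf estimator_section_measurable[OF th D]]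
            close sep) auto
    qed
    ultimately have "ennreal (?K * err T v) \<le> (\<integral>\<^sup>+D. L v D \<partial>sample_law PX (mf v) A \<sigma> n)"
      unfolding err_def by (intro ennreal_mult_measure_le_nn_integral) auto
    also have "\<dots> \<le> ?sup"
      unfolding L_def using mf_C[OF v] by (rule SUP_upper)
    finally show ?thesis .
  qed
  have "min_test_error PX W mf A \<sigma> n \<le> (\<Sum>v\<in>W. err T v) / card W"
    unfolding min_test_error_def err_def using T
    by (intro cInf_lower bdd_belowI[of _ 0]) (auto intro!: divide_nonneg_nonneg sum_nonneg)
  then have "ennreal (?K * min_test_error PX W mf A \<sigma> n) \<le> ennreal (?K * ((\<Sum>v\<in>W. err T v) / card W))"
    by (intro ennreal_leI mult_left_mono) auto
  also have "?K * ((\<Sum>v\<in>W. err T v) / card W) = (\<Sum>v\<in>W. ?K * err T v) / card W"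
    by (simp add: sum_distrib_left)
  also have "ennreal \<dots> \<le> ?sup"
    using W err_bound by (intro ennreal_mean_le) (auto simp: err_def)
  finally show ?thesis .
qed

lemma minimax_EB_ge_min_test_error:
  fixes PX :: "'x measure" and W :: "'v set" and mf :: "'v \<Rightarrow> 'x \<Rightarrow> real"
  assumes PX: "prob_space PX" and A: "0 \<le> A" and \<sigma>: "0 < \<sigma>"
    and W: "finite W" "W \<noteq> {}"
    and mf_C: "\<And>v. v \<in> W \<Longrightarrow> mf v \<in> C" and mf: "\<And>v. v \<in> W \<Longrightarrow> mf v \<in> borel_measurable PX"
    and sep: "\<And>v w. v \<in> W \<Longrightarrow> w \<in> W \<Longrightarrow> v \<noteq> w \<Longrightarrow>
                ennreal (\<delta>\<^sup>2) \<le> (\<integral>\<^sup>+x. ennreal ((mf v x - mf w x)\<^sup>2) \<partial>PX)"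
    and close: "\<And>v w x. v \<in> W \<Longrightarrow> w \<in> W \<Longrightarrow> x \<in> space PX \<Longrightarrow> (mf v x - mf w x)\<^sup>2 \<le> (\<sigma>\<^sup>2 + A) / 4"
  shows "ennreal (\<sigma>^4 / (\<sigma>\<^sup>2 + A)\<^sup>2 * \<delta>\<^sup>2 * min_test_error PX W mf A \<sigma> n) \<le> ennreal 24 * minimax_EB PX C A \<sigma> n"
proof -
  have "ennreal (\<sigma>^4 / (\<sigma>\<^sup>2 + A)\<^sup>2 * \<delta>\<^sup>2 / 24 * min_test_error PX W mf A \<sigma> n) \<le> minimax_EB PX C A \<sigma> n"
    unfolding minimax_EB_def
    by (intro INF_greatest min_test_error_le_sup_excess_risk[OF PX A \<sigma> W mf_C mf sep close])
  then have "ennreal 24 * ennreal (\<sigma>^4 / (\<sigma>\<^sup>2 + A)\<^sup>2 * \<delta>\<^sup>2 / 24 * min_test_error PX W mf A \<sigma> n)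
      \<le> ennreal 24 * minimax_EB PX C A \<sigma> n"
    by (rule mult_left_mono) simp
  then show ?thesis
    by (simp add: ennreal_mult'[symmetric] del: ennreal_numeral)
qed

theorem lemma1:
  shows "\<exists>c::real. \<forall>(PX :: 'x measure) (C :: ('x \<Rightarrow> real) set) (A::real) (\<sigma>::real)
            (V :: nat \<Rightarrow> 'v set) (m :: nat \<Rightarrow> 'v \<Rightarrow> 'x \<Rightarrow> real) (\<delta> :: nat \<Rightarrow> real).
     prob_space PX \<and> A \<ge> 0 \<and> \<sigma> > 0
     \<and> (\<forall>n. finite (V n) \<and> V n \<noteq> {})
     \<and> (\<forall>n. \<forall>v\<in>V n. m n v \<in> C \<and> m n v \<in> borel_measurable PX)
     \<and> (\<forall>n. \<delta> n > 0)
     \<and> (\<forall>n. \<forall>v\<in>V n. \<forall>v'\<in>V n. v \<noteq> v' \<longrightarrow>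
           (\<integral>\<^sup>+ x. ennreal ((m n v x - m n v' x)\<^sup>2) \<partial>PX) \<ge> ennreal ((\<delta> n)\<^sup>2))
     \<and> ((\<lambda>n. SUP v\<in>V n. SUP v'\<in>V n. SUP x\<in>space PX. ereal ((m n v x - m n v' x)\<^sup>2))
           \<longlonglongrightarrow> 0)
     \<longrightarrow> (\<forall>\<^sub>F n in sequentially.
           ennreal (\<sigma>^4 / (\<sigma>\<^sup>2 + A)\<^sup>2 * (\<delta> n)\<^sup>2 * min_test_error PX (V n) (m n) A \<sigma> n)
             \<le> ennreal c * minimax_EB PX C A \<sigma> n)"
proof (intro exI[of _ 24] allI impI, elim conjE)
  fix PX :: "'x measure" and C :: "('x \<Rightarrow> real) set" and A \<sigma> :: real
    and V :: "nat \<Rightarrow> 'v set" and m :: "nat \<Rightarrow> 'v \<Rightarrow> 'x \<Rightarrow> real" and \<delta> :: "nat \<Rightarrow> real"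
  assume PX: "prob_space PX" and A: "A \<ge> 0" and \<sigma>: "\<sigma> > 0"
    and V: "\<forall>n. finite (V n) \<and> V n \<noteq> {}"
    and m: "\<forall>n. \<forall>v\<in>V n. m n v \<in> C \<and> m n v \<in> borel_measurable PX"
    and sep: "\<forall>n. \<forall>v\<in>V n. \<forall>v'\<in>V n. v \<noteq> v' \<longrightarrow>
                (\<integral>\<^sup>+ x. ennreal ((m n v x - m n v' x)\<^sup>2) \<partial>PX) \<ge> ennreal ((\<delta> n)\<^sup>2)"
    and lim: "(\<lambda>n. SUP v\<in>V n. SUP v'\<in>V n. SUP x\<in>space PX. ereal ((m n v x - m n v' x)\<^sup>2)) \<longlonglongrightarrow> 0"
  have "\<forall>\<^sub>F n in sequentially. (SUP v\<in>V n. SUP v'\<in>V n. SUP x\<in>space PX. ereal ((m n v x - m n v' x)\<^sup>2)) < ereal (\<sigma>\<^sup>2 / 4)"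
    using \<sigma> by (intro order_tendstoD(2)[OF lim]) (simp add: zero_ereal_def)
  then have "\<forall>\<^sub>F n in sequentially. \<forall>v\<in>V n. \<forall>w\<in>V n. \<forall>x\<in>space PX. (m n v x - m n w x)\<^sup>2 \<le> (\<sigma>\<^sup>2 + A) / 4"
    by eventually_elim (use A in \<open>fastforce dest!: SUP_lessD\<close>)
  then show "\<forall>\<^sub>F n in sequentially.
      ennreal (\<sigma>^4 / (\<sigma>\<^sup>2 + A)\<^sup>2 * (\<delta> n)\<^sup>2 * min_test_error PX (V n) (m n) A \<sigma> n)
        \<le> ennreal 24 * minimax_EB PX C A \<sigma> n"
  proof eventually_elim
    case (elim n)
    with V m sep show ?case
      by (intro minimax_EB_ge_min_test_error[OF PX A \<sigma>]) auto
  qed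
qed

end
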